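(* Let $f,g\in\mathrm{Diffeo}^-(\mathbb{R})$ with $f(0)=g(0)=0$ and $f\circ f=g\circ g$. Suppose $(T_0f)\circ(T_0f)\neq X$. Then $T_0f=T_0g$, and $f$ is conjugate to $g$ by an element of $\mathrm{Diffeo}^+(\mathbb{R})$, i.e. $f=h^{-1}\circ g\circ h$ for some $h\in\mathrm{Diffeo}^+(\mathbb{R})$.
   Context: $\mathrm{Diffeo}(\mathbb{R})$ is the group of $C^\infty$ diffeomorphisms of $\mathbb{R}$ under composition; $\mathrm{Diffeo}^+(\mathbb{R})$ (resp. $\mathrm{Diffeo}^-(\mathbb{R})$) is the set of orientation-preserving (resp. orientation-reversing) diffeomorphisms. For a diffeomorphism $\phi$ with $\phi(0)=0$, $T_0\phi=\phi'(0)X+\frac{\phi''(0)}{2}X^2+\cdots$ is its Taylor series at $0$, viewed as a formal power series under formal composition; $X$ denotes the identity series. *)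

theory Defs
  imports "HOL-Analysis.Analysis" "HOL-Computational_Algebra.Formal_Power_Series"
begin

definition smooth :: "(real \<Rightarrow> real) \<Rightarrow> bool" where
  "smooth f \<longleftrightarrow> (\<forall>n x. ((deriv ^^ n) f) differentiable (at x))"

definition diffeo :: "(real \<Rightarrow> real) \<Rightarrow> bool" where
  "diffeo f \<longleftrightarrow> bij f \<and> smooth f \<and> smooth (inv f)"

definition diffeo_plus :: "(real \<Rightarrow> real) \<Rightarrow> bool" where
  "diffeo_plus f \<longleftrightarrow> diffeo f \<and> strict_mono f"

definition diffeo_minus :: "(real \<Rightarrow> real) \<Rightarrow> bool" where
  "diffeo_minus f \<longleftrightarrow> diffeo f \<and> (\<forall>x y. x < y \<longrightarrow> f y < f x)"

definition taylor0 :: "(real \<Rightarrow> real) \<Rightarrow> real fps" where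
  "taylor0 f = Abs_fps (\<lambda>n. (deriv ^^ n) f 0 / fact n)"

end

theory Submission
  imports Defs
begin

text \<open>The Taylor series \<open>\<phi> = T\<^sub>0f\<close> and \<open>\<psi> = T\<^sub>0g\<close> are formal square roots, with negative
  linear coefficients, of the same series \<open>F \<noteq> X\<close>. If they differed, comparing the squares at
  the first degree \<open>n\<close> where they differ gives \<open>a + a\<^sup>n = 0\<close> for \<open>a = \<phi>\<^sub>1\<close>, so \<open>a = -1\<close> and \<open>n\<close>
  is even. Write \<open>F = X + E\<close> with \<open>E\<close> of order \<open>p\<close>; since \<open>\<phi>\<close> commutes with \<open>F\<close> and
  \<open>\<phi>\<^sub>1 = -1\<close>, \<open>p\<close> is odd. But \<open>\<theta> = \<psi>\<^sup>-\<^sup>1 \<circ> \<phi> = X + D\<close> with \<open>D\<close> of order exactly \<open>n\<close>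
  also commutes with \<open>F\<close>, and the commutator of \<open>X + D\<close> and \<open>X + E\<close> has leading coefficient
  \<open>(n - p) D\<^sub>n E\<^sub>p\<close>, which forces \<open>n = p\<close>: a parity contradiction.

  Once \<open>T\<^sub>0f = T\<^sub>0g\<close>, the map equal to \<open>g \<circ> f\<^sup>-\<^sup>1\<close> on \<open>(-\<infinity>, 0)\<close> and to the identity on
  \<open>[0, \<infinity>)\<close> is smooth, because \<open>g \<circ> f\<^sup>-\<^sup>1 - id\<close> is flat at \<open>0\<close>, and \<open>f \<circ> f = g \<circ> g\<close> makes it
  conjugate \<open>f\<close> to \<open>g\<close>.\<close>

section \<open>Formal power series\<close>

notation fps_nth (infixl "$$" 75)

lemma fps_power_nth_eq_of_agree:
  fixes B C :: "'a::comm_ring_1 fps"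
  assumes B0: "B$$0 = 0" and C0: "C$$0 = 0" and agree: "\<forall>j<k. B$$j = C$$j"
  shows "j < k \<or> (j = k \<and> i \<ge> 2) \<Longrightarrow> (B^i)$$j = (C^i)$$j"
proof (induction i arbitrary: j)
  case 0
  then show ?case by simp
next
  case (Suc i)
  have "(B^Suc i)$$j = (\<Sum>l=0..j. B$$l * (B^i)$$(j-l))" by (simp add: fps_mult_nth)
  also have "\<dots> = (\<Sum>l=0..j. C$$l * (C^i)$$(j-l))"
  proof (rule sum.cong[OF refl])
    fix l assume l: "l \<in> {0..j}"
    show "B$$l * (B^i)$$(j-l) = C$$l * (C^i)$$(j-l)"
    proof (cases "l = 0 \<or> (j = k \<and> l = k)")
      case True
      then show ?thesis using B0 C0 Suc.prems by (auto simp: fps_power_zeroth power_0_left)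
    next
      case False
      then have "l < k" "j - l < k" using l Suc.prems by auto
      then show ?thesis using Suc.IH agree by simp
    qed
  qed
  also have "\<dots> = (C^Suc i)$$j" by (simp add: fps_mult_nth)
  finally show ?case .
qed

lemma fps_compose_nth_diff_right:
  fixes A B C :: "'a::comm_ring_1 fps"
  assumes B0: "B$$0 = 0" and C0: "C$$0 = 0" and agree: "\<forall>j<k. B$$j = C$$j" and k1: "k \<ge> 1"
  shows "(A oo B)$$k - (A oo C)$$k = A$$1 * (B$$k - C$$k)"
proof -
  have "(A oo B)$$k - (A oo C)$$k = (\<Sum>i=0..k. A$$i * ((B^i)$$k - (C^i)$$k))"
    unfolding fps_compose_nth by (simp add: sum_subtractf right_diff_distrib)
  also have "\<dots> = (\<Sum>i=0..k. if i = 1 then A$$1 * (B$$k - C$$k) else 0)"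
  proof (rule sum.cong[OF refl])
    fix i assume "i \<in> {0..k}"
    show "A$$i * ((B^i)$$k - (C^i)$$k) = (if i = 1 then A$$1 * (B$$k - C$$k) else 0)"
      using fps_power_nth_eq_of_agree[OF B0 C0 agree, of k i] k1
      by (cases "i = 0 \<or> i = 1") auto
  qed
  also have "\<dots> = A$$1 * (B$$k - C$$k)" using k1 by (simp add: sum.delta)
  finally show ?thesis .
qed

lemma fps_compose_nth_diff_left:
  fixes A A' B :: "'a::comm_ring_1 fps"
  assumes B0: "B$$0 = 0" and agree: "\<forall>j<k. A$$j = A'$$j"
  shows "(A oo B)$$k - (A' oo B)$$k = (A$$k - A'$$k) * (B$$1)^k"
proof -
  have "(A oo B)$$k - (A' oo B)$$k = (\<Sum>i=0..k. (A$$i - A'$$i) * (B^i)$$k)"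
    unfolding fps_compose_nth by (simp add: sum_subtractf left_diff_distrib)
  also have "\<dots> = (\<Sum>i=0..k. if i = k then (A$$k - A'$$k) * (B$$1)^k else 0)"
    by (rule sum.cong[OF refl]) (use agree startsby_zero_power_nth_same[OF B0, of k] in auto)
  also have "\<dots> = (A$$k - A'$$k) * (B$$1)^k" by (simp add: sum.delta)
  finally show ?thesis .
qed

lemma fps_compose_nth_1:
  fixes A B :: "'a::comm_ring_1 fps"
  assumes "B$$0 = 0"
  shows "(A oo B)$$1 = A$$1 * B$$1"
  using assms by (simp add: fps_compose_nth)

lemma fps_power_X_plus_nth:
  fixes E :: "'a::comm_ring_1 fps"
  assumes Ep: "\<forall>j<p. E$$j = 0" and p2: "p \<ge> 2"
  shows "m < i + 2*p - 2 \<Longrightarrow>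
    ((fps_X + E)^i)$$m = (if m = i then 1 else 0) + of_nat i * E$$(m+1-i)"
proof (induction i arbitrary: m)
  case 0
  then show ?case by simp
next
  case (Suc i)
  define P where "P = (fps_X + E)^i"
  have E0: "E$$0 = 0" using Ep p2 by auto
  have EP: "(E*P)$$m = (if i \<le> m then E$$(m-i) else 0)"
  proof -
    have "(E*P)$$m = (\<Sum>k=0..m. E$$k * P$$(m-k))" by (simp add: fps_mult_nth)
    also have "\<dots> = (\<Sum>k=0..m. if k = m - i \<and> i \<le> m then E$$(m-i) else 0)"
    proof (rule sum.cong[OF refl])
      fix k assume k: "k \<in> {0..m}"
      show "E$$k * P$$(m-k) = (if k = m - i \<and> i \<le> m then E$$(m-i) else 0)"
      proof (cases "k < p")
        case True
        then show ?thesis using Ep by auto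
      next
        case False
        then have "m - k < i + 2*p - 2" "m-k+1-i < p" using Suc.prems p2 k by auto
        then have "P$$(m-k) = (if m-k = i then 1 else 0)"
          using Suc.IH Ep unfolding P_def by auto
        then show ?thesis using k by auto
      qed
    qed
    also have "\<dots> = (if i \<le> m then E$$(m-i) else 0)"
      by (cases "i \<le> m") (auto simp: sum.delta)
    finally show ?thesis .
  qed
  have "((fps_X + E)^Suc i)$$m = (if m = 0 then 0 else P$$(m-1)) + (if i \<le> m then E$$(m-i) else 0)"
    using EP by (simp add: P_def distrib_right fps_X_mult_nth)
  also have "\<dots> = (if m = Suc i then 1 else 0) + of_nat (Suc i) * E$$(m+1-Suc i)"
  proof (cases m)
    case 0
    then show ?thesis using E0 by auto
  next
    case (Suc m')
    then have "P$$m' = (if m' = i then 1 else 0) + of_nat i * E$$(m'+1-i)"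
      using Suc.IH Suc.prems unfolding P_def by simp
    moreover have "\<not> i \<le> m \<Longrightarrow> E$$(m - i) = 0" using E0 by auto
    ultimately show ?thesis using Suc by (auto simp: algebra_simps)
  qed
  finally show ?case .
qed

lemma fps_compose_X_plus_nth:
  fixes D E :: "'a::comm_ring_1 fps"
  assumes Dn: "\<forall>j<n. D$$j = 0" and Ep: "\<forall>j<p. E$$j = 0" and n2: "n \<ge> 2" and p2: "p \<ge> 2"
  shows "(D oo (fps_X + E))$$(n+p-1) = D$$(n+p-1) + of_nat n * D$$n * E$$p"
proof -
  let ?m = "n+p-1"
  have "(D oo (fps_X + E))$$?m = (\<Sum>i=0..?m. D$$i * ((fps_X + E)^i)$$?m)"
    by (simp add: fps_compose_nth)
  also have "\<dots> = (\<Sum>i=0..?m. (if i = ?m then D$$?m else 0) + (if i = n then of_nat n * D$$n * E$$p else 0))"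
  proof (rule sum.cong[OF refl])
    fix i assume i: "i \<in> {0..?m}"
    show "D$$i * ((fps_X + E)^i)$$?m
      = (if i = ?m then D$$?m else 0) + (if i = n then of_nat n * D$$n * E$$p else 0)"
    proof (cases "i < n")
      case True
      then show ?thesis using Dn n2 p2 by auto
    next
      case False
      then have "((fps_X + E)^i)$$?m = (if ?m = i then 1 else 0) + of_nat i * E$$(?m+1-i)"
        using fps_power_X_plus_nth[OF Ep p2, of ?m i] p2 by auto
      moreover have "i \<noteq> n \<Longrightarrow> E$$(?m+1-i) = 0" using False i Ep p2 by auto
      moreover have "i = n \<Longrightarrow> ?m+1-i = p" "n \<noteq> ?m" using n2 p2 by auto
      ultimately show ?thesis by (auto simp: algebra_simps)
    qed
  qed
  also have "\<dots> = D$$?m + of_nat n * D$$n * E$$p"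
    using n2 p2 by (simp add: sum.distrib sum.delta)
  finally show ?thesis .
qed

lemma fps_commute_X_plus_leading_coeffs:
  fixes D E :: "'a::comm_ring_1 fps"
  assumes Dn: "\<forall>j<n. D$$j = 0" and Ep: "\<forall>j<p. E$$j = 0" and n2: "n \<ge> 2" and p2: "p \<ge> 2"
    and comm: "(fps_X + D) oo (fps_X + E) = (fps_X + E) oo (fps_X + D)"
  shows "(of_nat n - of_nat p) * D$$n * E$$p = 0"
proof -
  have D0: "(fps_X + D)$$0 = 0" and E0: "(fps_X + E)$$0 = 0" using Dn Ep n2 p2 by auto
  have "((fps_X + D) oo (fps_X + E))$$(n+p-1)
      = (fps_X + E)$$(n+p-1) + D$$(n+p-1) + of_nat n * D$$n * E$$p"
    using fps_compose_X_plus_nth[OF Dn Ep n2 p2]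
    by (simp add: fps_compose_add_distrib fps_X_fps_compose_startby0[OF E0])
  moreover have "((fps_X + E) oo (fps_X + D))$$(n+p-1)
      = (fps_X + D)$$(n+p-1) + E$$(n+p-1) + of_nat p * E$$p * D$$n"
    using fps_compose_X_plus_nth[OF Ep Dn p2 n2]
    by (simp add: fps_compose_add_distrib fps_X_fps_compose_startby0[OF D0] add.commute[of p n])
  ultimately have "(fps_X + E)$$(n+p-1) + D$$(n+p-1) + of_nat n * D$$n * E$$p
      = (fps_X + D)$$(n+p-1) + E$$(n+p-1) + of_nat p * E$$p * D$$n"
    using comm by simp
  then show ?thesis by (simp add: algebra_simps)
qed

lemma fps_commute_neg_X_plus_odd_order:
  fixes \<phi> E :: "'a::{idom,ring_char_0} fps"
  assumes \<phi>0: "\<phi>$$0 = 0" and \<phi>1: "\<phi>$$1 = -1"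
    and Ep: "\<forall>j<p. E$$j = 0" and Ep_nz: "E$$p \<noteq> 0" and p1: "p \<ge> 1"
    and comm: "\<phi> oo (fps_X + E) = (fps_X + E) oo \<phi>"
  shows "odd p"
proof -
  have F0: "(fps_X + E)$$0 = 0" using Ep p1 by simp
  have "\<forall>j<p. (fps_X + E)$$j = fps_X$$j" using Ep by simp
  from fps_compose_nth_diff_right[OF F0 _ this p1]
  have "(\<phi> oo (fps_X + E))$$p - (\<phi> oo fps_X)$$p = \<phi>$$1 * ((fps_X + E)$$p - fps_X$$p)"
    by simp
  then have "(\<phi> oo (fps_X + E))$$p = \<phi>$$p - E$$p" using \<phi>1 by (simp add: algebra_simps)
  moreover have "((fps_X + E) oo \<phi>)$$p = \<phi>$$p + E$$p * (-1)^p"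
    using fps_compose_nth_diff_left[OF \<phi>0, of p "fps_X + E" fps_X] Ep \<phi>0 \<phi>1
    by (simp add: diff_eq_eq add.commute)
  ultimately have "E$$p * ((-1)^p + 1) = 0" using comm by (simp add: algebra_simps)
  then have "(-1::'a)^p = -1" using Ep_nz by (simp add: add_eq_0_iff2)
  then show "odd p" by (metis neg_one_even_power one_neq_neg_one)
qed

lemma neg_power_eq_self_imp:
  fixes a :: real
  assumes a: "a > 0" and n: "n \<ge> 2" and e: "(-a)^n = a"
  shows "a = 1 \<and> even n"
proof -
  have ev: "even n"
  proof (rule ccontr)
    assume "odd n"
    then have "(-a)^n < 0" using a by (simp add: power_minus_odd)
    then show False using e a by linarith
  qed
  then have "a * a^(n-1) = a * 1" using e n by (simp add: power_minus_even flip: power_Suc)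
  then have "a^(n-1) = 1" using a by simp
  then show ?thesis using a ev n power_eq_1_iff[of a "n-1"] by auto
qed

lemma fps_linear_coeff_eq_of_equal_squares:
  fixes \<phi> \<psi> :: "real fps"
  assumes "\<phi>$$0 = 0" "\<psi>$$0 = 0" "\<phi>$$1 < 0" "\<psi>$$1 < 0" "\<phi> oo \<phi> = \<psi> oo \<psi>"
  shows "\<phi>$$1 = \<psi>$$1"
proof -
  have "\<phi>$$1 * \<phi>$$1 = \<psi>$$1 * \<psi>$$1"
    using assms(5) fps_compose_nth_1[OF assms(1), of \<phi>] fps_compose_nth_1[OF assms(2), of \<psi>]
    by metis
  then have "(\<phi>$$1 - \<psi>$$1) * (\<phi>$$1 + \<psi>$$1) = 0" by (simp add: algebra_simps)
  then show ?thesis using assms(3,4) by simp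
qed

lemma fps_first_difference_of_equal_squares:
  fixes \<phi> \<psi> :: "real fps"
  assumes \<phi>0: "\<phi>$$0 = 0" and \<psi>0: "\<psi>$$0 = 0" and lin: "\<phi>$$1 = \<psi>$$1" and \<phi>1: "\<phi>$$1 < 0"
    and eq: "\<phi> oo \<phi> = \<psi> oo \<psi>"
    and agree: "\<forall>j<n. \<phi>$$j = \<psi>$$j" and differ: "\<phi>$$n \<noteq> \<psi>$$n"
  shows "\<phi>$$1 = -1 \<and> even n"
proof -
  have n2: "n \<ge> 2" using differ lin \<phi>0 \<psi>0 by (cases n; cases "n - 1"; auto)
  have "(\<phi> oo \<phi>)$$n - (\<phi> oo \<psi>)$$n = \<phi>$$1 * (\<phi>$$n - \<psi>$$n)"
    using fps_compose_nth_diff_right[OF \<phi>0 \<psi>0 agree] n2 by simp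
  moreover have "(\<phi> oo \<psi>)$$n - (\<psi> oo \<psi>)$$n = (\<phi>$$n - \<psi>$$n) * (\<psi>$$1)^n"
    by (rule fps_compose_nth_diff_left[OF \<psi>0 agree])
  ultimately have "(\<phi>$$n - \<psi>$$n) * (\<phi>$$1 + (\<phi>$$1)^n) = 0"
    using eq lin by (simp add: algebra_simps)
  then have "(-(-\<phi>$$1))^n = -\<phi>$$1" using differ by simp
  then show ?thesis using neg_power_eq_self_imp[of "-\<phi>$$1" n] \<phi>1 n2 by auto
qed

lemma fps_inv_compose_order:
  fixes \<phi> \<psi> :: "'a::field fps"
  assumes \<phi>0: "\<phi>$$0 = 0" and \<psi>0: "\<psi>$$0 = 0" and \<psi>1: "\<psi>$$1 \<noteq> 0"
    and agree: "\<forall>j<n. \<phi>$$j = \<psi>$$j" and differ: "\<phi>$$n \<noteq> \<psi>$$n"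
  shows "\<forall>j<n. ((fps_inv \<psi> oo \<phi>) - fps_X)$$j = 0" and "((fps_inv \<psi> oo \<phi>) - fps_X)$$n \<noteq> 0"
proof -
  define \<theta> where "\<theta> = fps_inv \<psi> oo \<phi>"
  have I0: "fps_inv \<psi> $$ 0 = 0" by (simp add: fps_inv_def)
  have \<theta>0: "\<theta>$$0 = 0" by (simp add: \<theta>_def I0)
  have \<psi>\<theta>: "\<psi> oo \<theta> = \<phi>"
    unfolding \<theta>_def using fps_compose_assoc[OF \<phi>0 I0, of \<psi>] fps_inv_right[OF \<psi>0 \<psi>1] \<phi>0 by simp
  have step: "\<phi>$$j - \<psi>$$j = \<psi>$$1 * (\<theta>$$j - fps_X$$j)"
    if "j \<ge> 1" and "\<forall>i<j. \<theta>$$i = fps_X$$i" for j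
    using fps_compose_nth_diff_right[OF \<theta>0 _ that(2) that(1), of \<psi>] \<psi>\<theta> by simp
  have lower: "\<theta>$$j = fps_X$$j" if "j < n" for j
    using that
  proof (induction j rule: less_induct)
    case (less j)
    then show ?case
      using step[of j] agree \<psi>1 \<theta>0 by (cases "j = 0") auto
  qed
  then have "\<forall>j<n. (\<theta> - fps_X)$$j = 0" by simp
  then show "\<forall>j<n. ((fps_inv \<psi> oo \<phi>) - fps_X)$$j = 0" by (simp only: \<theta>_def)
  have "n \<ge> 1" using differ \<phi>0 \<psi>0 by (cases n) auto
  then show "((fps_inv \<psi> oo \<phi>) - fps_X)$$n \<noteq> 0"
    using step[of n] lower differ by (auto simp: \<theta>_def)
qed

lemma fps_self_compose_odd_order:
  fixes \<phi> :: "'a::{idom,ring_char_0} fps"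
  assumes \<phi>0: "\<phi>$$0 = 0" and \<phi>1: "\<phi>$$1 = -1" and not_X: "\<phi> oo \<phi> \<noteq> fps_X"
  shows "subdegree ((\<phi> oo \<phi>) - fps_X) \<ge> 2" and "odd (subdegree ((\<phi> oo \<phi>) - fps_X))"
proof -
  define E where "E = (\<phi> oo \<phi>) - fps_X"
  define p where "p = subdegree E"
  have "E \<noteq> 0" using not_X by (simp add: E_def)
  then have Ep_nz: "E$$p \<noteq> 0" by (simp add: p_def)
  have Ep: "\<forall>j<p. E$$j = 0" using nth_less_subdegree_zero[of _ E, folded p_def] by simp
  have "E$$0 = 0" "E$$1 = 0"
    using fps_compose_nth_1[OF \<phi>0, of \<phi>] \<phi>0 \<phi>1 by (simp_all add: E_def)
  then show p2: "p \<ge> 2" using Ep_nz by (cases p; cases "p - 1"; auto)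
  have "\<phi> oo (fps_X + E) = (fps_X + E) oo \<phi>"
    using fps_compose_assoc[OF \<phi>0 \<phi>0, of \<phi>] by (simp add: E_def)
  then show "odd p"
    using fps_commute_neg_X_plus_odd_order[OF \<phi>0 \<phi>1 Ep Ep_nz] p2 by simp
qed

lemma fps_inv_compose_commutes_with_square:
  fixes \<phi> \<psi> :: "'a::field fps"
  assumes \<phi>0: "\<phi>$$0 = 0" and \<psi>0: "\<psi>$$0 = 0" and \<psi>1: "\<psi>$$1 \<noteq> 0" and eq: "\<phi> oo \<phi> = \<psi> oo \<psi>"
  shows "(fps_inv \<psi> oo \<phi>) oo (\<phi> oo \<phi>) = (\<phi> oo \<phi>) oo (fps_inv \<psi> oo \<phi>)"
proof -
  define I where "I = fps_inv \<psi>"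
  have I0: "I$$0 = 0" unfolding I_def by (simp add: fps_inv_def)
  have \<psi>I: "\<psi> oo I = fps_X" and I\<psi>: "I oo \<psi> = fps_X"
    unfolding I_def using fps_inv_right[OF \<psi>0 \<psi>1] fps_inv[OF \<psi>0 \<psi>1] by simp_all
  have \<phi>\<phi>0: "(\<phi> oo \<phi>)$$0 = 0" and \<psi>\<phi>0: "(\<psi> oo \<phi>)$$0 = 0" using \<phi>0 \<psi>0 by simp_all
  have "(I oo \<phi>) oo (\<phi> oo \<phi>) = I oo ((\<phi> oo \<phi>) oo \<phi>)"
    by (simp add: fps_compose_assoc \<phi>0 \<phi>\<phi>0)
  also have "\<dots> = I oo (\<psi> oo (\<psi> oo \<phi>))"
    by (simp add: eq fps_compose_assoc \<phi>0 \<psi>0)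
  also have "\<dots> = (I oo \<psi>) oo (\<psi> oo \<phi>)"
    by (simp add: fps_compose_assoc[where a=I and b=\<psi> and c="\<psi> oo \<phi>"] \<psi>0 \<psi>\<phi>0)
  also have "\<dots> = \<psi> oo \<phi>"
    using fps_X_fps_compose_startby0[OF \<psi>\<phi>0] by (simp add: I\<psi>)
  also have "\<dots> = (\<psi> oo (\<psi> oo I)) oo \<phi>"
    by (simp add: \<psi>I)
  also have "\<dots> = ((\<psi> oo \<psi>) oo I) oo \<phi>"
    using fps_compose_assoc[OF I0 \<psi>0, of \<psi>] by simp
  also have "\<dots> = (\<phi> oo \<phi>) oo (I oo \<phi>)"
    using fps_compose_assoc[OF \<phi>0 I0, of "\<phi> oo \<phi>"] eq by simp
  finally show ?thesis unfolding I_def .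
qed

lemma fps_negative_square_root_unique:
  fixes \<phi> \<psi> :: "real fps"
  assumes \<phi>0: "\<phi>$$0 = 0" and \<psi>0: "\<psi>$$0 = 0" and \<phi>1: "\<phi>$$1 < 0" and \<psi>1: "\<psi>$$1 < 0"
    and eq: "\<phi> oo \<phi> = \<psi> oo \<psi>" and not_X: "\<phi> oo \<phi> \<noteq> fps_X"
  shows "\<phi> = \<psi>"
proof (rule ccontr)
  assume "\<phi> \<noteq> \<psi>"
  define n where "n = subdegree (\<phi> - \<psi>)"
  have differ: "\<phi>$$n \<noteq> \<psi>$$n"
    using nth_subdegree_nonzero[of "\<phi> - \<psi>"] \<open>\<phi> \<noteq> \<psi>\<close> by (simp add: n_def)
  have agree: "\<forall>j<n. \<phi>$$j = \<psi>$$j"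
    using nth_less_subdegree_zero[of _ "\<phi> - \<psi>", folded n_def] by simp
  have lin: "\<phi>$$1 = \<psi>$$1"
    by (rule fps_linear_coeff_eq_of_equal_squares[OF \<phi>0 \<psi>0 \<phi>1 \<psi>1 eq])
  then have \<phi>1': "\<phi>$$1 = -1" and \<psi>1': "\<psi>$$1 = -1" and "even n"
    using fps_first_difference_of_equal_squares[OF \<phi>0 \<psi>0 lin \<phi>1 eq agree differ] by auto
  have n2: "n \<ge> 2" using differ lin \<phi>0 \<psi>0 by (cases n; cases "n - 1"; auto)
  define E where "E = (\<phi> oo \<phi>) - fps_X"
  define p where "p = subdegree E"
  have "E \<noteq> 0" using not_X by (simp add: E_def)
  then have Ep_nz: "E$$p \<noteq> 0" by (simp add: p_def)
  have Ep: "\<forall>j<p. E$$j = 0" using nth_less_subdegree_zero[of _ E, folded p_def] by simp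
  have p2: "p \<ge> 2" and "odd p"
    using fps_self_compose_odd_order[OF \<phi>0 \<phi>1' not_X] by (simp_all add: p_def E_def)
  define D where "D = (fps_inv \<psi> oo \<phi>) - fps_X"
  have Dn: "\<forall>j<n. D$$j = 0" and Dn_nz: "D$$n \<noteq> 0"
    using fps_inv_compose_order[OF \<phi>0 \<psi>0 _ agree differ] \<psi>1' by (simp_all add: D_def)
  have "(fps_X + D) oo (fps_X + E) = (fps_X + E) oo (fps_X + D)"
    using fps_inv_compose_commutes_with_square[OF \<phi>0 \<psi>0 _ eq] \<psi>1' by (simp add: D_def E_def)
  then have "(of_nat n - of_nat p) * D$$n * E$$p = (0::real)"
    by (rule fps_commute_X_plus_leading_coeffs[OF Dn Ep n2 p2])
  then have "n = p" using Dn_nz Ep_nz by simp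
  then show False using \<open>even n\<close> \<open>odd p\<close> by simp
qed

section \<open>Smooth functions\<close>

lemma funpow_deriv_Suc: "(deriv ^^ Suc n) f = (deriv ^^ n) (deriv f)"
  by (simp add: funpow_Suc_right del: funpow.simps)

lemma smooth_iff: "smooth f \<longleftrightarrow> (\<forall>x. f differentiable (at x)) \<and> smooth (deriv f)"
  unfolding smooth_def
proof safe
  fix n x
  assume "\<forall>n x. (deriv ^^ n) f differentiable at x"
  then show "f differentiable at x" and "(deriv ^^ n) (deriv f) differentiable at x"
    by (metis funpow_0, metis funpow_deriv_Suc)
next
  fix n x
  assume "\<forall>x. f differentiable at x" and "\<forall>n x. (deriv ^^ n) (deriv f) differentiable at x"
  then show "(deriv ^^ n) f differentiable at x"
    by (cases n) (simp_all add: funpow_deriv_Suc del: funpow.simps)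
qed

lemma smooth_coinduct:
  assumes "P f" and step: "\<And>u. P u \<Longrightarrow> (\<forall>x. u differentiable (at x)) \<and> P (deriv u)"
  shows "smooth f"
proof -
  have "\<forall>u. P u \<longrightarrow> P ((deriv ^^ n) u)" for n
    by (induction n) (simp_all add: funpow_deriv_Suc step del: funpow.simps)
  then show ?thesis unfolding smooth_def using assms by blast
qed

lemma smooth_imp_differentiable: "smooth f \<Longrightarrow> f differentiable (at x)"
  and smooth_deriv: "smooth f \<Longrightarrow> smooth (deriv f)"
  using smooth_iff by blast+

lemma smooth_has_real_derivative: "smooth f \<Longrightarrow> (f has_real_derivative deriv f x) (at x)"
  using smooth_imp_differentiable DERIV_deriv_iff_real_differentiable by blast

lemma smooth_const: "smooth (\<lambda>x. c)"
  by (rule smooth_coinduct[where P="\<lambda>u. \<exists>c. u = (\<lambda>x. c)"]) auto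

lemma smooth_ident: "smooth (\<lambda>x. x)"
  by (rule smooth_coinduct[where P="\<lambda>u. u = (\<lambda>x. x) \<or> (\<exists>c. u = (\<lambda>x. c))"]) auto

lemma real_differentiable_imp_field_differentiable:
  "(f :: real \<Rightarrow> real) differentiable (at x) \<Longrightarrow> f field_differentiable (at x)"
  by (simp add: real_differentiable_def field_differentiable_def)

context
  fixes u v :: "real \<Rightarrow> real"
  assumes du: "\<And>x. u differentiable (at x)" and dv: "\<And>x. v differentiable (at x)"
begin

lemma deriv_add_fun: "deriv (\<lambda>x. u x + v x) = (\<lambda>x. deriv u x + deriv v x)"
  and deriv_diff_fun: "deriv (\<lambda>x. u x - v x) = (\<lambda>x. deriv u x - deriv v x)"
  and deriv_mult_fun: "deriv (\<lambda>x. u x * v x) = (\<lambda>x. deriv u x * v x + u x * deriv v x)"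
  and deriv_compose_fun: "deriv (\<lambda>x. u (v x)) = (\<lambda>x. deriv u (v x) * deriv v x)"
  using du dv deriv_chain[of v _ u, unfolded o_def]
  by (auto simp: real_differentiable_imp_field_differentiable)

end

text \<open>Closure of smoothness under products and compositions is proved coinductively: the
  derivative of a sum of products \<open>a (g x) * b x\<close> of smooth functions is again such a sum.\<close>

inductive sum_of_products :: "(real \<Rightarrow> real) \<Rightarrow> bool" where
  "smooth a \<Longrightarrow> smooth b \<Longrightarrow> sum_of_products (\<lambda>x. a x * b x)"
| "sum_of_products u \<Longrightarrow> sum_of_products v \<Longrightarrow> sum_of_products (\<lambda>x. u x + v x)"

lemma sum_of_products_deriv:
  "sum_of_products u \<Longrightarrow> (\<forall>x. u differentiable (at x)) \<and> sum_of_products (deriv u)"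
proof (induction rule: sum_of_products.induct)
  case (1 a b)
  have "\<And>x. a differentiable (at x)" "\<And>x. b differentiable (at x)"
    using 1 smooth_imp_differentiable by blast+
  moreover have "sum_of_products (\<lambda>x. deriv a x * b x + a x * deriv b x)"
    using 1 by (intro sum_of_products.intros) (auto intro: smooth_deriv)
  ultimately show ?case by (simp add: deriv_mult_fun)
next
  case (2 u v)
  then show ?case by (auto simp: deriv_add_fun intro: sum_of_products.intros)
qed

lemma smooth_mult: "smooth a \<Longrightarrow> smooth b \<Longrightarrow> smooth (\<lambda>x. a x * b x)"
  by (rule smooth_coinduct[where P=sum_of_products])
    (auto intro: sum_of_products.intros dest: sum_of_products_deriv)

lemma smooth_add: "smooth a \<Longrightarrow> smooth b \<Longrightarrow> smooth (\<lambda>x. a x + b x)"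
proof -
  assume "smooth a" "smooth b"
  then have "sum_of_products (\<lambda>x. (\<lambda>x. a x * 1) x + (\<lambda>x. b x * 1) x)"
    using smooth_const by (intro sum_of_products.intros)
  then show ?thesis
    by (intro smooth_coinduct[where P=sum_of_products]) (auto dest: sum_of_products_deriv)
qed

lemma smooth_diff: "smooth a \<Longrightarrow> smooth b \<Longrightarrow> smooth (\<lambda>x. a x - b x)"
  using smooth_add[OF _ smooth_mult[OF _ smooth_const], of a b "-1"] by simp

inductive sum_of_products_through :: "(real \<Rightarrow> real) \<Rightarrow> (real \<Rightarrow> real) \<Rightarrow> bool" for g where
  "smooth a \<Longrightarrow> smooth b \<Longrightarrow> sum_of_products_through g (\<lambda>x. a (g x) * b x)"
| "sum_of_products_through g u \<Longrightarrow> sum_of_products_through g v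
    \<Longrightarrow> sum_of_products_through g (\<lambda>x. u x + v x)"

lemma sum_of_products_through_deriv:
  assumes g: "smooth g"
  shows "sum_of_products_through g u
    \<Longrightarrow> (\<forall>x. u differentiable (at x)) \<and> sum_of_products_through g (deriv u)"
proof (induction rule: sum_of_products_through.induct)
  case (1 a b)
  have da: "\<And>x. a differentiable (at x)" and db: "\<And>x. b differentiable (at x)"
    and dg: "\<And>x. g differentiable (at x)"
    using 1 g smooth_imp_differentiable by blast+
  have dag: "\<And>x. (\<lambda>x. a (g x)) differentiable (at x)"
    using da dg by (simp add: differentiable_chain_at[unfolded o_def])
  have "sum_of_products_through g
      (\<lambda>x. (\<lambda>x. deriv a (g x) * (deriv g x * b x)) x + (\<lambda>x. a (g x) * deriv b x) x)"
    using 1 g by (intro sum_of_products_through.intros) (auto intro: smooth_deriv smooth_mult)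
  then have "sum_of_products_through g (deriv (\<lambda>x. a (g x) * b x))"
    using dag db da dg by (simp add: deriv_mult_fun deriv_compose_fun algebra_simps)
  then show ?case using dag db by auto
next
  case (2 u v)
  then show ?case by (auto simp: deriv_add_fun intro: sum_of_products_through.intros)
qed

lemma smooth_compose: "smooth a \<Longrightarrow> smooth g \<Longrightarrow> smooth (\<lambda>x. a (g x))"
  using sum_of_products_through.intros(1)[OF _ smooth_const, of a g 1]
    smooth_coinduct[where P="sum_of_products_through g" and f="\<lambda>x. a (g x) * 1"]
    sum_of_products_through_deriv
  by auto

lemma derivn_add:
  "smooth u \<Longrightarrow> smooth v \<Longrightarrow> (deriv ^^ n) (\<lambda>x. u x + v x) = (\<lambda>x. (deriv ^^ n) u x + (deriv ^^ n) v x)"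
proof (induction n arbitrary: u v)
  case (Suc n)
  then show ?case
    by (simp add: funpow_deriv_Suc deriv_add_fun smooth_imp_differentiable smooth_deriv
        del: funpow.simps)
qed simp

lemma derivn_diff:
  "smooth u \<Longrightarrow> smooth v \<Longrightarrow> (deriv ^^ n) (\<lambda>x. u x - v x) = (\<lambda>x. (deriv ^^ n) u x - (deriv ^^ n) v x)"
proof (induction n arbitrary: u v)
  case (Suc n)
  then show ?case
    by (simp add: funpow_deriv_Suc deriv_diff_fun smooth_imp_differentiable smooth_deriv
        del: funpow.simps)
qed simp

section \<open>Taylor series at 0\<close>

lemma taylor0_nth: "taylor0 f $$ n = (deriv ^^ n) f 0 / fact n"
  by (simp add: taylor0_def)

lemma taylor0_deriv: "taylor0 (deriv f) = fps_deriv (taylor0 f)"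
proof (rule fps_ext)
  fix n
  have "(fact (Suc n) :: real) = of_nat (n+1) * fact n" by simp
  then show "taylor0 (deriv f) $$ n = fps_deriv (taylor0 f) $$ n"
    by (simp add: taylor0_nth funpow_deriv_Suc del: funpow.simps fact_Suc)
qed

lemma taylor0_Suc: "taylor0 f $$ Suc n = taylor0 (deriv f) $$ n / of_nat (Suc n)"
  by (simp add: taylor0_deriv)

lemma taylor0_add: "smooth u \<Longrightarrow> smooth v \<Longrightarrow> taylor0 (\<lambda>x. u x + v x) = taylor0 u + taylor0 v"
  by (rule fps_ext) (simp add: taylor0_nth derivn_add add_divide_distrib del: funpow.simps)

lemma taylor0_diff: "smooth u \<Longrightarrow> smooth v \<Longrightarrow> taylor0 (\<lambda>x. u x - v x) = taylor0 u - taylor0 v"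
  by (rule fps_ext) (simp add: taylor0_nth derivn_diff diff_divide_distrib del: funpow.simps)

lemma taylor0_ident: "taylor0 (\<lambda>x. x) = fps_X"
proof (rule fps_ext)
  fix n
  have higher: "(deriv ^^ Suc (Suc k)) (\<lambda>x::real. x) = (\<lambda>x. 0)" for k
    by (induction k) (simp_all add: funpow_deriv_Suc del: funpow.simps)
  consider "n = 0" | "n = 1" | k where "n = Suc (Suc k)"
    by (metis One_nat_def not0_implies_Suc)
  then show "taylor0 (\<lambda>x. x) $$ n = fps_X $$ n"
    by cases (simp_all only: taylor0_nth higher, simp_all add: funpow_deriv_Suc fps_X_nth)
qed

lemma taylor0_mult:
  assumes "smooth u" "smooth v"
  shows "taylor0 (\<lambda>x. u x * v x) = taylor0 u * taylor0 v"
proof -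
  have "\<forall>u v. smooth u \<longrightarrow> smooth v \<longrightarrow> taylor0 (\<lambda>x. u x * v x) $$ n = (taylor0 u * taylor0 v) $$ n"
    for n
  proof (induction n)
    case 0
    then show ?case by (simp add: taylor0_nth)
  next
    case (Suc n)
    show ?case
    proof (intro allI impI)
      fix u v :: "real \<Rightarrow> real" assume u: "smooth u" and v: "smooth v"
      have du: "\<And>x. u differentiable (at x)" and dv: "\<And>x. v differentiable (at x)"
        and su': "smooth (deriv u)" and sv': "smooth (deriv v)"
        using u v smooth_imp_differentiable smooth_deriv by blast+
      have "taylor0 (\<lambda>x. u x * v x) $$ Suc n
          = taylor0 (\<lambda>x. deriv u x * v x + u x * deriv v x) $$ n / of_nat (Suc n)"
        by (simp only: taylor0_Suc deriv_mult_fun[OF du dv])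
      also have "taylor0 (\<lambda>x. deriv u x * v x + u x * deriv v x)
          = taylor0 (\<lambda>x. deriv u x * v x) + taylor0 (\<lambda>x. u x * deriv v x)"
        using su' sv' u v by (intro taylor0_add smooth_mult)
      also have "(taylor0 (\<lambda>x. deriv u x * v x) + taylor0 (\<lambda>x. u x * deriv v x)) $$ n
          = fps_deriv (taylor0 u * taylor0 v) $$ n"
        using Suc su' sv' u v by (simp add: taylor0_deriv algebra_simps del: fps_deriv_nth)
      finally show "taylor0 (\<lambda>x. u x * v x) $$ Suc n = (taylor0 u * taylor0 v) $$ Suc n"
        by (simp del: of_nat_Suc fps_deriv_mult)
    qed
  qed
  then show ?thesis using assms by (intro fps_ext) blast
qed

lemma taylor0_compose:
  assumes f: "smooth f" and g: "smooth g" and g0: "g 0 = 0"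
  shows "taylor0 (\<lambda>x. f (g x)) = taylor0 f oo taylor0 g"
proof -
  have tg0: "taylor0 g $$ 0 = 0" using g0 by (simp add: taylor0_nth)
  have "\<forall>f. smooth f \<longrightarrow> taylor0 (\<lambda>x. f (g x)) $$ n = (taylor0 f oo taylor0 g) $$ n" for n
  proof (induction n rule: less_induct)
    case (less n)
    show ?case
    proof (cases n)
      case 0
      then show ?thesis using g0 by (simp add: taylor0_nth)
    next
      case (Suc m)
      show ?thesis
      proof (intro allI impI)
        fix f :: "real \<Rightarrow> real" assume f: "smooth f"
        have df: "\<And>x. f differentiable (at x)" and dg: "\<And>x. g differentiable (at x)"
          and sf': "smooth (deriv f)" and sg': "smooth (deriv g)"
          using f g smooth_imp_differentiable smooth_deriv by blast+
        have sfg: "smooth (\<lambda>x. deriv f (g x))" using sf' g by (rule smooth_compose)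
        have "taylor0 (\<lambda>x. f (g x)) $$ Suc m
            = taylor0 (\<lambda>x. deriv f (g x) * deriv g x) $$ m / of_nat (Suc m)"
          by (simp only: taylor0_Suc deriv_compose_fun[OF df dg])
        also have "taylor0 (\<lambda>x. deriv f (g x) * deriv g x)
            = taylor0 (\<lambda>x. deriv f (g x)) * taylor0 (deriv g)"
          using sfg sg' by (rule taylor0_mult)
        also have "(taylor0 (\<lambda>x. deriv f (g x)) * taylor0 (deriv g)) $$ m
            = ((taylor0 (deriv f) oo taylor0 g) * taylor0 (deriv g)) $$ m"
          using less Suc sf' by (simp add: fps_mult_nth)
        also have "\<dots> = fps_deriv (taylor0 f oo taylor0 g) $$ m"
          by (simp add: taylor0_deriv fps_compose_deriv[OF tg0] del: fps_deriv_nth)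
        finally show "taylor0 (\<lambda>x. f (g x)) $$ n = (taylor0 f oo taylor0 g) $$ n"
          using Suc by (simp del: of_nat_Suc)
      qed
    qed
  qed
  then show ?thesis using f by (intro fps_ext) blast
qed

section \<open>Gluing along flat functions\<close>

lemma has_real_derivative_cut_at_0:
  fixes k k' :: "real \<Rightarrow> real"
  assumes dk: "\<And>x. (k has_real_derivative k' x) (at x)" and k0: "k 0 = 0" and k'0: "k' 0 = 0"
  shows "((\<lambda>x. if x < 0 then k x else 0) has_real_derivative (if x < 0 then k' x else 0)) (at x)"
proof -
  let ?H = "\<lambda>x. if x < 0 then k x else (0::real)"
  consider "x < 0" | "x > 0" | "x = 0" by linarith
  then show ?thesis
  proof cases
    case 1
    have "(?H has_real_derivative k' x) (at x)"
      by (rule has_field_derivative_transform_within_open[OF dk[of x], where S="{..<0}"]) (use 1 in auto)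
    then show ?thesis using 1 by simp
  next
    case 2
    have "((\<lambda>x. 0) has_real_derivative 0) (at x)" by simp
    then have "(?H has_real_derivative 0) (at x)"
      by (rule has_field_derivative_transform_within_open[where S="{0<..}"]) (use 2 in auto)
    then show ?thesis using 2 by simp
  next
    case 3
    have lim: "((\<lambda>y. (k y - k 0) / (y - 0)) \<longlongrightarrow> 0) (at 0)"
      using dk[of 0] k'0 by (simp add: has_field_derivative_iff)
    have "((\<lambda>y. (?H y - ?H 0) / (y - 0)) \<longlongrightarrow> 0) (at_left 0)"
    proof -
      have ev: "eventually (\<lambda>y. (k y - k 0) / (y - 0) = (?H y - ?H 0) / (y - 0)) (at_left (0::real))"
        by (rule eventually_at_leftI[of "-1"]) (auto simp: k0)
      have "((\<lambda>y. (k y - k 0) / (y - 0)) \<longlongrightarrow> 0) (at_left 0)"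
        using lim filterlim_at_split by blast
      then show ?thesis using iffD1[OF tendsto_cong[OF ev]] by blast
    qed
    moreover have "((\<lambda>y. (?H y - ?H 0) / (y - 0)) \<longlongrightarrow> 0) (at_right 0)"
    proof -
      have ev: "eventually (\<lambda>y. 0 = (?H y - ?H 0) / (y - 0)) (at_right (0::real))"
        by (rule eventually_at_rightI[of _ "1"]) auto
      show ?thesis using iffD1[OF tendsto_cong[OF ev]] tendsto_const by blast
    qed
    ultimately have "((\<lambda>y. (?H y - ?H 0) / (y - 0)) \<longlongrightarrow> 0) (at 0)"
      by (rule filterlim_split_at)
    then show ?thesis using 3 by (simp add: has_field_derivative_iff)
  qed
qed

lemma smooth_cut_at_0:
  assumes k: "smooth k" and flat: "taylor0 k = 0"
  shows "smooth (\<lambda>x. if x < 0 then k x else 0)"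
proof -
  define G where "G n = (\<lambda>x. if x < 0 then (deriv ^^ n) k x else 0)" for n
  have "(deriv ^^ n) k 0 = 0" for n
    using arg_cong[OF flat, of "\<lambda>F. F $$ n"] by (simp add: taylor0_nth del: funpow.simps)
  moreover have "((deriv ^^ n) k has_real_derivative (deriv ^^ Suc n) k y) (at y)" for n y
    using k unfolding smooth_def by (simp add: DERIV_deriv_iff_real_differentiable)
  ultimately have dG: "(G n has_real_derivative G (Suc n) x) (at x)" for n x
    unfolding G_def by (intro has_real_derivative_cut_at_0)
  have "(deriv ^^ n) (\<lambda>x. if x < 0 then k x else 0) = G n" for n
  proof (induction n)
    case (Suc n)
    then show ?case using DERIV_imp_deriv[OF dG] by auto
  qed (simp add: G_def fun_eq_iff)
  then show ?thesis unfolding smooth_def using dG real_differentiable_def by metis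
qed

definition graft_left :: "(real \<Rightarrow> real) \<Rightarrow> real \<Rightarrow> real" where
  "graft_left u x = (if x < 0 then u x else x)"

lemma smooth_graft_left:
  assumes u: "smooth u" and tu: "taylor0 u = fps_X"
  shows "smooth (graft_left u)"
proof -
  have "taylor0 (\<lambda>x. u x - x) = 0"
    using taylor0_diff[OF u smooth_ident] tu by (simp add: taylor0_ident)
  then have "smooth (\<lambda>x. x + (if x < 0 then u x - x else 0))"
    by (intro smooth_add smooth_ident smooth_cut_at_0 smooth_diff u)
  also have "(\<lambda>x. x + (if x < 0 then u x - x else 0)) = graft_left u"
    by (simp add: fun_eq_iff graft_left_def)
  finally show ?thesis .
qed

lemma graft_left_inverse:
  assumes "\<And>x. x < 0 \<Longrightarrow> u x < 0" and "\<And>x. x < 0 \<Longrightarrow> v (u x) = x"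
  shows "graft_left v (graft_left u x) = x"
  using assms by (simp add: graft_left_def)

lemma strict_mono_graft_left:
  assumes neg: "\<And>x. x < 0 \<Longrightarrow> u x < 0" and mono: "\<And>x y. x < y \<Longrightarrow> y < 0 \<Longrightarrow> u x < u y"
  shows "strict_mono (graft_left u)"
proof (rule strict_monoI)
  fix x y :: real
  assume "x < y"
  then show "graft_left u x < graft_left u y"
    using neg[of x] mono[of x y] by (auto simp: graft_left_def)
qed

lemma diffeo_plus_graft_left:
  assumes "smooth u" "smooth v" "taylor0 u = fps_X" "taylor0 v = fps_X"
    and "\<And>x. x < 0 \<Longrightarrow> u x < 0" "\<And>x. x < 0 \<Longrightarrow> v x < 0"
    and "\<And>x. x < 0 \<Longrightarrow> v (u x) = x" "\<And>x. x < 0 \<Longrightarrow> u (v x) = x"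
    and "\<And>x y. x < y \<Longrightarrow> y < 0 \<Longrightarrow> u x < u y"
  shows "diffeo_plus (graft_left u)" and "inv (graft_left u) = graft_left v"
proof -
  have vu: "graft_left v \<circ> graft_left u = id"
    using graft_left_inverse[of u v] assms(5,7) by (simp add: fun_eq_iff)
  have uv: "graft_left u \<circ> graft_left v = id"
    using graft_left_inverse[of v u] assms(6,8) by (simp add: fun_eq_iff)
  show inv: "inv (graft_left u) = graft_left v"
    by (rule inv_unique_comp[OF uv vu])
  show "diffeo_plus (graft_left u)"
    unfolding diffeo_plus_def diffeo_def inv
    using o_bij[OF vu uv] smooth_graft_left strict_mono_graft_left assms by simp
qed

section \<open>Diffeomorphisms\<close>

lemma diffeo_inv: "diffeo f \<Longrightarrow> diffeo (inv f)"
  by (simp add: diffeo_def bij_imp_bij_inv inv_inv_eq)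

lemma diffeo_minus_inv:
  assumes "diffeo_minus f"
  shows "diffeo_minus (inv f)"
  unfolding diffeo_minus_def
proof (intro conjI allI impI)
  have bij: "bij f" and dec: "\<And>x y. x < y \<Longrightarrow> f y < f x"
    using assms by (auto simp: diffeo_minus_def diffeo_def)
  show "diffeo (inv f)" using assms by (simp add: diffeo_minus_def diffeo_inv)
  fix x y :: real
  assume "x < y"
  show "inv f y < inv f x"
  proof (rule ccontr)
    assume "\<not> inv f y < inv f x"
    then consider "inv f x = inv f y" | "inv f x < inv f y" by linarith
    then show False
    proof cases
      case 1
      then show False using \<open>x < y\<close> by (metis bij bij_inv_eq_iff less_irrefl)
    next
      case 2
      then show False using \<open>x < y\<close> dec[OF 2] by (simp add: bij bij_is_surj surj_f_inv_f)
    qed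
  qed
qed

lemma diffeo_minus_sign:
  assumes "diffeo_minus f" and "f 0 = 0"
  shows "x < 0 \<Longrightarrow> f x > 0" and "x > 0 \<Longrightarrow> f x < 0"
  using assms by (metis diffeo_minus_def)+

lemma diffeo_inv_0:
  assumes "diffeo f" and "f 0 = 0"
  shows "inv f 0 = 0"
  using assms by (metis diffeo_def bij_inv_eq_iff)

lemma taylor0_diffeo_inv:
  assumes "diffeo f" and "f 0 = 0"
  shows "taylor0 f oo taylor0 (inv f) = fps_X"
proof -
  have "taylor0 f oo taylor0 (inv f) = taylor0 (\<lambda>x. f (inv f x))"
    using assms diffeo_inv_0 by (simp add: diffeo_def taylor0_compose)
  also have "(\<lambda>x. f (inv f x)) = (\<lambda>x. x)"
    using assms by (simp add: diffeo_def bij_is_surj surj_f_inv_f)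
  finally show ?thesis by (simp add: taylor0_ident)
qed

lemma taylor0_diffeo_minus_linear_coeff:
  assumes f: "diffeo_minus f" and f0: "f 0 = 0"
  shows "taylor0 f $$ 1 < 0"
proof -
  have "taylor0 f $$ 1 * taylor0 (inv f) $$ 1 = 1"
    using taylor0_diffeo_inv[of f] fps_compose_nth_1[of "taylor0 (inv f)" "taylor0 f"]
      diffeo_inv_0[of f] assms
    by (simp add: diffeo_minus_def taylor0_nth fps_X_nth)
  then have "deriv f 0 \<noteq> 0" by (auto simp: taylor0_nth)
  moreover have "\<not> deriv f 0 > 0"
  proof
    assume "deriv f 0 > 0"
    then obtain d where "d > 0" "\<And>h. 0 < h \<Longrightarrow> h < d \<Longrightarrow> f 0 < f (0 + h)"
      using DERIV_pos_inc_right smooth_has_real_derivative f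
      by (metis diffeo_def diffeo_minus_def)
    then have "f 0 < f (d/2)" by simp
    moreover have "f (d/2) < f 0" using f \<open>d > 0\<close> by (simp add: diffeo_minus_def)
    ultimately show False by simp
  qed
  ultimately show ?thesis by (simp add: taylor0_nth)
qed

lemma diffeo_minus_conjugate_of_equal_squares:
  assumes df: "diffeo_minus f" and dg: "diffeo_minus g" and f0: "f 0 = 0" and g0: "g 0 = 0"
    and ff: "\<And>x. f (f x) = g (g x)" and taylor_eq: "taylor0 f = taylor0 g"
  shows "\<exists>h. diffeo_plus h \<and> f = inv h \<circ> g \<circ> h"
proof -
  have bij: "bij f" "bij g" and smooth: "smooth f" "smooth g" "smooth (inv f)" "smooth (inv g)"
    using df dg by (simp_all add: diffeo_minus_def diffeo_def)
  have inv0: "inv f 0 = 0" "inv g 0 = 0"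
    using df dg f0 g0 diffeo_inv_0 by (simp_all add: diffeo_minus_def)
  have sign: "\<And>x. x < 0 \<Longrightarrow> f x > 0" "\<And>x. x > 0 \<Longrightarrow> g x < 0" "\<And>x. x > 0 \<Longrightarrow> f x < 0"
    "\<And>x. x < 0 \<Longrightarrow> inv f x > 0" "\<And>x. x < 0 \<Longrightarrow> inv g x > 0"
    using diffeo_minus_sign diffeo_minus_inv df dg f0 g0 inv0 by metis+
  have inverse: "\<And>x. f (inv f x) = x" "\<And>x. inv g (g x) = x" "\<And>x. g (inv g x) = x"
    "\<And>x. inv f (f x) = x"
    using bij by (simp_all add: bij_is_surj bij_is_inj surj_f_inv_f)
  define u where "u x = g (inv f x)" for x
  define v where "v x = f (inv g x)" for x
  have "taylor0 u = fps_X" "taylor0 v = fps_X"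
    using taylor0_compose[of g "inv f"] taylor0_compose[of f "inv g"] smooth inv0
      taylor0_diffeo_inv[of f] taylor0_diffeo_inv[of g] df dg f0 g0 taylor_eq
    by (simp_all add: u_def[abs_def] v_def[abs_def] diffeo_minus_def)
  moreover have "x < y \<Longrightarrow> y < 0 \<Longrightarrow> u x < u y" for x y
    using df dg diffeo_minus_inv[OF df] by (simp add: u_def diffeo_minus_def)
  ultimately have h: "diffeo_plus (graft_left u)" and inv_h: "inv (graft_left u) = graft_left v"
    using diffeo_plus_graft_left[of u v] smooth_compose smooth sign inverse
    by (simp_all add: u_def[abs_def] v_def[abs_def])
  have "f x = graft_left v (g (graft_left u x))" for x
  proof (cases "x < 0")
    case True
    then have "g (graft_left u x) = f x"
      using ff[of "inv f x"] inverse by (simp add: graft_left_def u_def)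
    then show ?thesis using sign(1)[OF True] by (simp add: graft_left_def)
  next
    case False
    then show ?thesis
      using sign(2)[of x] inverse f0 g0 by (cases "x = 0") (auto simp: graft_left_def v_def)
  qed
  then show ?thesis using h inv_h by (auto simp: fun_eq_iff)
qed

theorem theorem3p2:
  fixes f g :: "real \<Rightarrow> real"
  assumes "diffeo_minus f" and "diffeo_minus g"
    and "f 0 = 0" and "g 0 = 0"
    and "f \<circ> f = g \<circ> g"
    and "taylor0 f oo taylor0 f \<noteq> fps_X"
  shows "taylor0 f = taylor0 g \<and> (\<exists>h. diffeo_plus h \<and> f = inv h \<circ> g \<circ> h)"
proof -
  have ff: "\<And>x. f (f x) = g (g x)" using assms(5) by (metis comp_apply)
  have "smooth f" "smooth g" using assms(1,2) by (simp_all add: diffeo_minus_def diffeo_def)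
  then have "taylor0 f oo taylor0 f = taylor0 g oo taylor0 g"
    using taylor0_compose[of f f] taylor0_compose[of g g] ff assms(3,4) by simp
  then have "taylor0 f = taylor0 g"
    using fps_negative_square_root_unique taylor0_diffeo_minus_linear_coeff assms(1-4,6)
    by (simp add: taylor0_nth)
  then show ?thesis using diffeo_minus_conjugate_of_equal_squares[OF assms(1-4) ff] by blast
qed

end
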